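(* Let $h:\Delta^n\to\mathbb{R}$ be strictly convex and consider the FTRL learning dynamic with regularizer $h$. Let $h^*(\mathbf{q}):=\max_{\mathbf{x}\in\Delta^n}\{\langle\mathbf{q},\mathbf{x}\rangle-h(\mathbf{x})\}$. Then for any $\mathbf{x}^*\in\Delta^n$, the learning operator with shift $\mathbf{x}^*$ is finitely lossless via the storage function $L(\mathbf{q})=h^*(\mathbf{q})-\langle\mathbf{q},\mathbf{x}^*\rangle+h(\mathbf{x}^* )$. In particular, for every action $j$ the learning operator with shift $\mathbf{e}_j$ is finitely lossless, so every FTRL dynamic is a finitely lossless learning dynamic.
   Context: $\Delta^n=\{\mathbf{x}\in\mathbb{R}^n: x_j\ge 0,\ \sum_j x_j=1\}$; $\mathbf{e}_j$ is the $j$-th standard basis vector. A learning dynamic over $n$ actions is specified by a conversion function $f:\mathbb{R}^n\to\Delta^n$: given an initial state $\mathbf{q}^0\in\mathbb{R}^n$ and an input function $\mathbf{p}:[0,\infty)\to\mathbb{R}^n$ square integrable on bounded intervals, the state is $\mathbf{q}(t)=\mathbf{q}^0+\int_0^t\mathbf{p}(\tau)\,d\tau$ and the strategy is $\mathbf{x}(t)=f(\mathbf{q}(t))$. The FTRL dynamic with strictly convex regularizer $h:\Delta^n\to\mathbb{R}$ has conversion function $f(\mathbf{q})=\arg\max_{\mathbf{x}\in\Delta^n}\{\langle\mathbf{q},\mathbf{x}\rangle-h(\mathbf{x})\}$. The learning operator with shift $\mathbf{x}^*\in\mathbb{R}^n$ has state $\mathbf{q}$, input $\mathbf{p}$, output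 $\mathbf{x}-\mathbf{x}^*$; it is lossless via a storage function $L:\mathbb{R}^n\to\mathbb{R}$ if for every $\mathbf{q}^0$, every $\mathbf{p}$ and every $t\ge0$, $L(\mathbf{q}(t))= L(\mathbf{q}^0)+\int_0^t\langle\mathbf{p}(\tau),\mathbf{x}(\tau)-\mathbf{x}^*\rangle\,d\tau$, and finitely lossless if it is lossless via a storage function bounded from below. A learning dynamic is finitely lossless if for every action $j$ its learning operator with shift $\mathbf{e}_j$ is finitely lossless. *)

theory Defs
  imports "HOL-Analysis.Analysis"
begin

definition prob_simplex :: "(real ^ 'n::finite) set" where
  "prob_simplex = {x. (\<forall>j. 0 \<le> x $ j) \<and> (\<Sum>j\<in>UNIV. x $ j) = 1}"

definition strictly_convex_on :: "'a::real_vector set \<Rightarrow> ('a \<Rightarrow> real) \<Rightarrow> bool" where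
  "strictly_convex_on S h \<longleftrightarrow> convex S \<and>
     (\<forall>x\<in>S. \<forall>y\<in>S. \<forall>u::real. x \<noteq> y \<and> 0 < u \<and> u < 1 \<longrightarrow>
        h ((1 - u) *\<^sub>R x + u *\<^sub>R y) < (1 - u) * h x + u * h y)"

definition ftrl :: "(real ^ 'n::finite \<Rightarrow> real) \<Rightarrow> real ^ 'n \<Rightarrow> real ^ 'n" where
  "ftrl h q = (THE x. x \<in> prob_simplex \<and> (\<forall>y\<in>prob_simplex. q \<bullet> y - h y \<le> q \<bullet> x - h x))"

definition conj_simplex :: "(real ^ 'n::finite \<Rightarrow> real) \<Rightarrow> real ^ 'n \<Rightarrow> real" where
  "conj_simplex h q = (SUP x\<in>prob_simplex. q \<bullet> x - h x)"

definition admissible_input :: "(real \<Rightarrow> real ^ 'n::finite) \<Rightarrow> bool" where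
  "admissible_input p \<longleftrightarrow> (\<forall>T\<ge>0. p \<in> borel_measurable (lebesgue_on {0..T}) \<and>
      integrable (lebesgue_on {0..T}) (\<lambda>t. (norm (p t))\<^sup>2))"

definition state :: "real ^ 'n::finite \<Rightarrow> (real \<Rightarrow> real ^ 'n) \<Rightarrow> real \<Rightarrow> real ^ 'n" where
  "state q0 p t = q0 + integral {0..t} p"

definition lossless_via ::
  "(real ^ 'n::finite \<Rightarrow> real ^ 'n) \<Rightarrow> real ^ 'n \<Rightarrow> (real ^ 'n \<Rightarrow> real) \<Rightarrow> bool" where
  "lossless_via f xs L \<longleftrightarrow>
     (\<forall>q0 p t. admissible_input p \<longrightarrow> 0 \<le> t \<longrightarrow>
        L (state q0 p t) = L q0 + integral {0..t} (\<lambda>\<tau>. p \<tau> \<bullet> (f (state q0 p \<tau>) - xs)))"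

definition finitely_lossless :: "(real ^ 'n::finite \<Rightarrow> real ^ 'n) \<Rightarrow> real ^ 'n \<Rightarrow> bool" where
  "finitely_lossless f xs \<longleftrightarrow> (\<exists>L. bdd_below (range L) \<and> lossless_via f xs L)"

definition finitely_lossless_dynamic :: "(real ^ 'n::finite \<Rightarrow> real ^ 'n) \<Rightarrow> bool" where
  "finitely_lossless_dynamic f \<longleftrightarrow> (\<forall>j. finitely_lossless f (axis j 1))"

end

theory Submission
  imports Defs
begin

(* Write X = ftrl h and h^c = conj_simplex h. Since X q maximises <q, x> - h x over the simplex, the
   Fenchel-Young inequality makes L q = h^c q - <q, xs> + h xs nonnegative and X q - xs a subgradient
   of L at q. Strict convexity makes the maximiser unique, so X has a closed graph into a compact set
   and is continuous. Along q t = q0 + int_0^t p, the subgradient inequality at the two ends of a short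
   interval [s, u] squeezes L (q u) - L (q s) between int_s^u <p, X (q s) - xs> and
   int_s^u <p, X (q u) - xs>; by uniform continuity of X o q both are within e * int_s^u |p| of
   int_s^u <p, X (q t) - xs>, and summing over a fine partition of [0, T] gives the exact identity. *)

lemma absolutely_integrable_if_square_integrable:
  fixes f :: "'a::euclidean_space \<Rightarrow> 'b::euclidean_space"
  assumes "f \<in> borel_measurable (lebesgue_on S)" "S \<in> lmeasurable"
    and "(\<lambda>x. (norm (f x))\<^sup>2) integrable_on S"
  shows "f absolutely_integrable_on S"
proof (rule measurable_bounded_by_integrable_imp_absolutely_integrable)
  show "(\<lambda>x. 1 + (norm (f x))\<^sup>2) integrable_on S"
    using assms(2,3) by (intro integrable_add integrable_on_const)
  show "norm (f x) \<le> 1 + (norm (f x))\<^sup>2" for x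
    using zero_le_power2[of "norm (f x) - 1/2"] by (simp add: power2_eq_square algebra_simps)
qed (use assms in auto)

lemma admissible_input_absolutely_integrable:
  assumes "admissible_input p" "0 \<le> T"
  shows "p absolutely_integrable_on {0..T}"
  using assms unfolding admissible_input_def
  by (intro absolutely_integrable_if_square_integrable integrable_on_lebesgue_on) auto

lemma absolutely_integrable_inner_continuous:
  fixes p w :: "real \<Rightarrow> 'a::euclidean_space"
  assumes "p absolutely_integrable_on {a..b}" "continuous_on {a..b} w"
  shows "(\<lambda>t. p t \<bullet> w t) absolutely_integrable_on {a..b}"
proof -
  have "(\<lambda>t. w t \<bullet> p t) absolutely_integrable_on {a..b}"
  proof (rule absolutely_integrable_bounded_measurable_product[where h = inner])
    show "bilinear (inner :: 'a \<Rightarrow> 'a \<Rightarrow> real)"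
      by (simp add: bilinear_conv_bounded_bilinear bounded_bilinear_inner)
    show "w \<in> borel_measurable (lebesgue_on {a..b})"
      using assms(2) by (intro continuous_imp_measurable_on_sets_lebesgue) auto
    show "bounded (w ` {a..b})"
      using assms(2) by (intro compact_imp_bounded compact_continuous_image) auto
  qed (use assms in auto)
  then show ?thesis
    by (simp add: inner_commute)
qed

lemma integral_atLeastAtMost_diff:
  fixes f :: "real \<Rightarrow> 'a::banach"
  assumes "f integrable_on {a..b}" "a \<le> s" "s \<le> u" "u \<le> b"
  shows "integral {a..u} f - integral {a..s} f = integral {s..u} f"
proof -
  have "f integrable_on {a..u}"
    using integrable_on_subinterval[OF assms(1)] assms by auto
  from Henstock_Kurzweil_Integration.integral_combine[OF assms(2,3) this] show ?thesis
    by (simp add: algebra_simps)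
qed

lemma eq_if_increments_dominated:
  fixes G F :: "real \<Rightarrow> real"
  assumes "a \<le> b"
    and dominated: "\<And>e. e > 0 \<Longrightarrow> \<exists>d>0. \<forall>s u. a \<le> s \<longrightarrow> s \<le> u \<longrightarrow> u \<le> b \<longrightarrow> u - s < d
               \<longrightarrow> \<bar>G u - G s\<bar> \<le> e * (F u - F s)"
  shows "G b = G a"
proof -
  have bound: "\<bar>G b - G a\<bar> \<le> e * (F b - F a)" if "e > 0" for e
  proof -
    obtain d where "d > 0" and d: "\<And>s u. a \<le> s \<Longrightarrow> s \<le> u \<Longrightarrow> u \<le> b \<Longrightarrow> u - s < d
               \<Longrightarrow> \<bar>G u - G s\<bar> \<le> e * (F u - F s)"
      using dominated[OF \<open>e > 0\<close>] by blast
    define t where "t k = min (a + real k * d / 2) b" for k :: nat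
    have telescope: "\<bar>G (t k) - G a\<bar> \<le> e * (F (t k) - F a)" for k
    proof (induction k)
      case 0
      then show ?case using \<open>a \<le> b\<close> by (simp add: t_def)
    next
      case (Suc k)
      have "\<bar>G (t (Suc k)) - G (t k)\<bar> \<le> e * (F (t (Suc k)) - F (t k))"
        using \<open>a \<le> b\<close> \<open>d > 0\<close> by (intro d) (auto simp: t_def min_def field_simps)
      with Suc show ?case by (simp add: algebra_simps)
    qed
    obtain k where "2 * (b - a) / d \<le> real k" using real_arch_simple by blast
    then have "t k = b" using \<open>d > 0\<close> by (simp add: t_def min_def field_simps)
    with telescope[of k] show ?thesis by simp
  qed
  have "\<bar>G b - G a\<bar> \<le> 0"
  proof (rule field_le_epsilon)
    fix e :: real assume "e > 0"
    define C where "C = \<bar>F b - F a\<bar> + 1"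
    have "C > 0" by (simp add: C_def add_pos_nonneg)
    have "\<bar>G b - G a\<bar> \<le> e / C * (F b - F a)"
      using bound[of "e / C"] \<open>e > 0\<close> \<open>C > 0\<close> by simp
    also have "\<dots> \<le> e / C * C"
      using \<open>e > 0\<close> \<open>C > 0\<close> by (intro mult_left_mono) (auto simp: C_def)
    also have "\<dots> = e"
      using \<open>C > 0\<close> by simp
    finally show "\<bar>G b - G a\<bar> \<le> 0 + e" by simp
  qed
  then show ?thesis by simp
qed

lemma integral_inner_deviation_bound:
  fixes p Y :: "'b::euclidean_space \<Rightarrow> 'a::euclidean_space"
  assumes "p integrable_on S" "(\<lambda>t. norm (p t)) integrable_on S"
    and "(\<lambda>t. p t \<bullet> Y t) integrable_on S"
    and "\<And>t. t \<in> S \<Longrightarrow> norm (Y t - c) \<le> e"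
  shows "\<bar>integral S p \<bullet> c - integral S (\<lambda>t. p t \<bullet> Y t)\<bar> \<le> e * integral S (\<lambda>t. norm (p t))"
proof -
  have pc: "(\<lambda>t. p t \<bullet> c) integrable_on S" and "integral S (\<lambda>t. p t \<bullet> c) = integral S p \<bullet> c"
    using integrable_linear[OF assms(1) bounded_linear_inner_left[of c]]
      integral_linear[OF assms(1) bounded_linear_inner_left[of c]] by (simp_all add: o_def)
  then have "integral S p \<bullet> c - integral S (\<lambda>t. p t \<bullet> Y t) = integral S (\<lambda>t. p t \<bullet> (c - Y t))"
    using integral_diff[OF pc assms(3)] by (simp add: inner_diff_right)
  also have "norm \<dots> \<le> integral S (\<lambda>t. e * norm (p t))"
  proof (rule Henstock_Kurzweil_Integration.integral_norm_bound_integral)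
    show "(\<lambda>t. p t \<bullet> (c - Y t)) integrable_on S"
      using integrable_diff[OF pc assms(3)] by (simp add: inner_diff_right)
    show "(\<lambda>t. e * norm (p t)) integrable_on S"
      using integrable_on_cmult_left[OF assms(2), of e] by simp
    fix t assume "t \<in> S"
    have "\<bar>p t \<bullet> (c - Y t)\<bar> \<le> norm (p t) * norm (c - Y t)"
      by (rule Cauchy_Schwarz_ineq2)
    also have "\<dots> \<le> norm (p t) * e"
      using assms(4)[OF \<open>t \<in> S\<close>] by (intro mult_left_mono) (auto simp: norm_minus_commute)
    finally show "norm (p t \<bullet> (c - Y t)) \<le> e * norm (p t)"
      by (simp add: mult.commute)
  qed
  finally show ?thesis
    by simp
qed

lemma subgradient_increment_bound:
  fixes L :: "'a::euclidean_space \<Rightarrow> real" and y :: "'a \<Rightarrow> 'a"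
    and p Y :: "'b::euclidean_space \<Rightarrow> 'a"
  assumes subgradient: "\<And>q q'. L q + (q' - q) \<bullet> y q \<le> L q'"
    and "b - a = integral S p"
    and "p integrable_on S" "(\<lambda>t. norm (p t)) integrable_on S"
    and "(\<lambda>t. p t \<bullet> Y t) integrable_on S"
    and "\<And>t. t \<in> S \<Longrightarrow> norm (Y t - y a) \<le> e" "\<And>t. t \<in> S \<Longrightarrow> norm (Y t - y b) \<le> e"
  shows "\<bar>L b - L a - integral S (\<lambda>t. p t \<bullet> Y t)\<bar> \<le> e * integral S (\<lambda>t. norm (p t))"
proof -
  have "a - b = - integral S p"
    using \<open>b - a = integral S p\<close> by (simp add: algebra_simps)
  then have "integral S p \<bullet> y a \<le> L b - L a" "L b - L a \<le> integral S p \<bullet> y b"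
    using subgradient[of a b] subgradient[of b a] \<open>b - a = integral S p\<close> by auto
  moreover have "\<bar>integral S p \<bullet> y a - integral S (\<lambda>t. p t \<bullet> Y t)\<bar> \<le> e * integral S (\<lambda>t. norm (p t))"
    "\<bar>integral S p \<bullet> y b - integral S (\<lambda>t. p t \<bullet> Y t)\<bar> \<le> e * integral S (\<lambda>t. norm (p t))"
    using assms(3-) by (blast intro: integral_inner_deviation_bound)+
  ultimately show ?thesis
    by linarith
qed

lemma subgradient_chain_rule:
  fixes L :: "'a::euclidean_space \<Rightarrow> real" and y :: "'a \<Rightarrow> 'a" and p :: "real \<Rightarrow> 'a"
  assumes subgradient: "\<And>q q'. L q + (q' - q) \<bullet> y q \<le> L q'"
    and "continuous_on UNIV y" and "p absolutely_integrable_on {0..T}" and "0 \<le> T"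
  shows "L (q0 + integral {0..T} p) = L q0 + integral {0..T} (\<lambda>\<tau>. p \<tau> \<bullet> y (q0 + integral {0..\<tau>} p))"
proof -
  define Q where "Q \<tau> = q0 + integral {0..\<tau>} p" for \<tau>
  define Y where "Y \<tau> = y (Q \<tau>)" for \<tau>
  define G where "G \<tau> = L (Q \<tau>) - integral {0..\<tau>} (\<lambda>t. p t \<bullet> Y t)" for \<tau>
  have p: "p integrable_on {0..T}" and norm_p: "(\<lambda>t. norm (p t)) integrable_on {0..T}"
    using assms(3) by (auto simp: absolutely_integrable_on_def)
  have "continuous_on {0..T} Y"
    unfolding Y_def Q_def
    by (intro continuous_on_compose2[OF assms(2)] continuous_intros indefinite_integral_continuous_1 p) auto
  then have pY: "(\<lambda>t. p t \<bullet> Y t) integrable_on {0..T}"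
    and "uniformly_continuous_on {0..T} Y"
    using absolutely_integrable_inner_continuous[OF assms(3)]
    by (auto simp: absolutely_integrable_on_def intro: compact_uniformly_continuous)
  have "G T = G 0"
  proof (rule eq_if_increments_dominated[OF \<open>0 \<le> T\<close>, where F = "\<lambda>\<tau>. integral {0..\<tau>} (\<lambda>t. norm (p t))"])
    fix e :: real assume "e > 0"
    then obtain d where "d > 0" and d: "\<And>t t'. t \<in> {0..T} \<Longrightarrow> t' \<in> {0..T} \<Longrightarrow> dist t' t < d
        \<Longrightarrow> dist (Y t') (Y t) < e"
      using \<open>uniformly_continuous_on {0..T} Y\<close> unfolding uniformly_continuous_on_def by metis
    show "\<exists>d>0. \<forall>s u. 0 \<le> s \<longrightarrow> s \<le> u \<longrightarrow> u \<le> T \<longrightarrow> u - s < d \<longrightarrow>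
        \<bar>G u - G s\<bar> \<le> e * (integral {0..u} (\<lambda>t. norm (p t)) - integral {0..s} (\<lambda>t. norm (p t)))"
    proof (intro exI[of _ d] conjI allI impI \<open>d > 0\<close>)
      fix s u assume su: "0 \<le> s" "s \<le> u" "u \<le> T" "u - s < d"
      then have sub: "{s..u} \<subseteq> {0..T}"
        by auto
      have "\<bar>L (Q u) - L (Q s) - integral {s..u} (\<lambda>t. p t \<bullet> Y t)\<bar> \<le> e * integral {s..u} (\<lambda>t. norm (p t))"
      proof (rule subgradient_increment_bound[OF subgradient])
        show "Q u - Q s = integral {s..u} p"
          using integral_atLeastAtMost_diff[OF p su(1-3)] by (simp add: Q_def)
        show "p integrable_on {s..u}" "(\<lambda>t. norm (p t)) integrable_on {s..u}"
          "(\<lambda>t. p t \<bullet> Y t) integrable_on {s..u}"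
          using p norm_p pY by (auto intro: integrable_on_subinterval[OF _ sub])
        show "norm (Y t - y (Q s)) \<le> e" "norm (Y t - y (Q u)) \<le> e" if "t \<in> {s..u}" for t
          using d[of s t] d[of t u] that su \<open>e > 0\<close>
          by (auto simp: Y_def dist_norm norm_minus_commute)
      qed
      then show "\<bar>G u - G s\<bar> \<le> e * (integral {0..u} (\<lambda>t. norm (p t)) - integral {0..s} (\<lambda>t. norm (p t)))"
        using integral_atLeastAtMost_diff[OF pY su(1-3)] integral_atLeastAtMost_diff[OF norm_p su(1-3)]
        by (simp add: G_def)
    qed
  qed
  then show ?thesis
    by (simp add: G_def Q_def Y_def)
qed

lemma lossless_via_if_continuous_subgradient:
  fixes f :: "real ^ 'n::finite \<Rightarrow> real ^ 'n"
  assumes "continuous_on UNIV f" and "\<And>q q'. L q + (q' - q) \<bullet> (f q - xs) \<le> L q'"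
  shows "lossless_via f xs L"
  unfolding lossless_via_def state_def
proof (intro allI impI)
  fix q0 and p :: "real \<Rightarrow> real ^ 'n" and t :: real
  assume "admissible_input p" "0 \<le> t"
  show "L (q0 + integral {0..t} p) = L q0 + integral {0..t} (\<lambda>\<tau>. p \<tau> \<bullet> (f (q0 + integral {0..\<tau>} p) - xs))"
    using assms \<open>0 \<le> t\<close> admissible_input_absolutely_integrable[OF \<open>admissible_input p\<close> \<open>0 \<le> t\<close>]
    by (intro subgradient_chain_rule[where y = "\<lambda>q. f q - xs"] continuous_intros)
qed

lemma continuous_on_unique_argmax:
  fixes f :: "'a::euclidean_space \<Rightarrow> 'b::euclidean_space \<Rightarrow> real" and g :: "'a \<Rightarrow> 'b"
  assumes "compact K" and f: "continuous_on (UNIV \<times> K) (\<lambda>(q, x). f q x)"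
    and "\<And>q. g q \<in> K" and max: "\<And>q y. y \<in> K \<Longrightarrow> f q y \<le> f q (g q)"
    and unique: "\<And>q x. x \<in> K \<Longrightarrow> \<forall>y\<in>K. f q y \<le> f q x \<Longrightarrow> x = g q"
  shows "continuous_on UNIV g"
proof -
  define A where "A y = (UNIV \<times> K) \<inter> (\<lambda>w. f (fst w) (snd w) - f (fst w) y) -` {0..}" for y
  have "K \<noteq> {}"
    using \<open>\<And>q. g q \<in> K\<close> by blast
  have graph: "range (\<lambda>q. (q, g q)) = (\<Inter>y\<in>K. A y)"
  proof (intro set_eqI iffI)
    fix w assume "w \<in> range (\<lambda>q. (q, g q))"
    then show "w \<in> (\<Inter>y\<in>K. A y)"
      using \<open>\<And>q. g q \<in> K\<close> max by (auto simp: A_def)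
  next
    fix w assume "w \<in> (\<Inter>y\<in>K. A y)"
    with \<open>K \<noteq> {}\<close> have "snd w \<in> K" "\<forall>y\<in>K. f (fst w) y \<le> f (fst w) (snd w)"
      by (auto simp: A_def)
    then have "snd w = g (fst w)"
      by (rule unique)
    then show "w \<in> range (\<lambda>q. (q, g q))"
      by (metis prod.collapse rangeI)
  qed
  have "closedin (top_of_set (UNIV \<times> K)) (A y)" if "y \<in> K" for y
  proof -
    have "continuous_on (UNIV \<times> K) (\<lambda>w. f (fst w) y)"
      using \<open>y \<in> K\<close>
      by (intro continuous_on_compose2[OF f, of "UNIV \<times> K" "\<lambda>w. (fst w, y)", simplified]
          continuous_intros) auto
    moreover have "continuous_on (UNIV \<times> K) (\<lambda>w. f (fst w) (snd w))"
      using f by (simp add: case_prod_beta')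
    ultimately show ?thesis
      unfolding A_def by (intro continuous_closedin_preimage continuous_on_diff) auto
  qed
  with \<open>K \<noteq> {}\<close> have "closedin (top_of_set (UNIV \<times> K)) (range (\<lambda>q. (q, g q)))"
    unfolding graph by blast
  then show ?thesis
    using continuous_closed_graph_eq[OF \<open>compact K\<close>] \<open>\<And>q. g q \<in> K\<close> by blast
qed

lemma axis_in_prob_simplex: "axis j 1 \<in> prob_simplex"
  unfolding prob_simplex_def by (auto simp: axis_def)

lemma compact_prob_simplex: "compact prob_simplex"
proof -
  have "prob_simplex \<subseteq> cbox (0 :: real ^ 'n::finite) 1"
  proof
    fix x :: "real ^ 'n" assume x: "x \<in> prob_simplex"
    have "x $ i \<le> 1" for i
    proof -
      have "x $ i = (\<Sum>j\<in>{i}. x $ j)" by simp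
      also have "\<dots> \<le> (\<Sum>j\<in>UNIV. x $ j)"
        using x by (intro sum_mono2) (auto simp: prob_simplex_def)
      finally show ?thesis using x by (simp add: prob_simplex_def)
    qed
    then show "x \<in> cbox 0 1" using x by (auto simp: mem_box_cart prob_simplex_def)
  qed
  moreover have "closed (prob_simplex :: (real ^ 'n) set)"
    unfolding prob_simplex_def Collect_conj_eq
    by (intro closed_Int closed_Collect_all closed_Collect_le closed_Collect_eq continuous_intros)
  ultimately show ?thesis
    using bounded_cbox bounded_subset compact_eq_bounded_closed by blast
qed

lemma strictly_convex_on_argmax_unique:
  fixes h :: "'a::real_inner \<Rightarrow> real"
  assumes "strictly_convex_on S h" and "x \<in> S" "z \<in> S"
    and "\<forall>y\<in>S. q \<bullet> y - h y \<le> q \<bullet> x - h x" "\<forall>y\<in>S. q \<bullet> y - h y \<le> q \<bullet> z - h z"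
  shows "x = z"
proof (rule ccontr)
  assume "x \<noteq> z"
  have "convex S"
    using assms(1) unfolding strictly_convex_on_def by blast
  have strict: "h ((1 - u) *\<^sub>R x + u *\<^sub>R z) < (1 - u) * h x + u * h z" if "0 < u" "u < 1" for u
    using assms(1-3) \<open>x \<noteq> z\<close> that unfolding strictly_convex_on_def by blast
  define m where "m = (1 - 1/2) *\<^sub>R x + (1/2 :: real) *\<^sub>R z"
  have "m \<in> S"
    using \<open>convex S\<close> assms(2,3) unfolding m_def by (intro convexD) auto
  then have "q \<bullet> m - h m \<le> q \<bullet> x - h x"
    using assms(4) by blast
  moreover have "h m < h x / 2 + h z / 2"
    using strict[of "1/2"] unfolding m_def by simp
  moreover have "q \<bullet> m = q \<bullet> x / 2 + q \<bullet> z / 2"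
    unfolding m_def by (simp add: inner_add_right)
  moreover have "q \<bullet> x - h x \<le> q \<bullet> z - h z" "q \<bullet> z - h z \<le> q \<bullet> x - h x"
    using assms(2-5) by blast+
  ultimately show False
    by linarith
qed

context
  fixes h :: "real ^ 'n::finite \<Rightarrow> real"
  assumes strictly_convex: "strictly_convex_on prob_simplex h"
    and continuous: "continuous_on prob_simplex h"
begin

lemma ftrl_argmax:
  shows ftrl_in_prob_simplex: "ftrl h q \<in> prob_simplex"
    and ftrl_maximal: "y \<in> prob_simplex \<Longrightarrow> q \<bullet> y - h y \<le> q \<bullet> ftrl h q - h (ftrl h q)"
proof -
  have "\<exists>x\<in>prob_simplex. \<forall>y\<in>prob_simplex. q \<bullet> y - h y \<le> q \<bullet> x - h x"
    using axis_in_prob_simplex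
    by (intro continuous_attains_sup compact_prob_simplex continuous_intros continuous) blast
  then have "\<exists>!x. x \<in> prob_simplex \<and> (\<forall>y\<in>prob_simplex. q \<bullet> y - h y \<le> q \<bullet> x - h x)"
    using strictly_convex_on_argmax_unique[OF strictly_convex] by blast
  from theI'[OF this] show "ftrl h q \<in> prob_simplex"
    and "y \<in> prob_simplex \<Longrightarrow> q \<bullet> y - h y \<le> q \<bullet> ftrl h q - h (ftrl h q)"
    unfolding ftrl_def by auto
qed

lemma conj_simplex_eq_ftrl: "conj_simplex h q = q \<bullet> ftrl h q - h (ftrl h q)"
  unfolding conj_simplex_def
  by (rule cSup_eq_maximum) (auto intro: ftrl_in_prob_simplex ftrl_maximal)

lemma fenchel_young: "x \<in> prob_simplex \<Longrightarrow> q \<bullet> x - h x \<le> conj_simplex h q"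
  by (simp add: conj_simplex_eq_ftrl ftrl_maximal)

lemma conj_simplex_subgradient: "conj_simplex h q + (q' - q) \<bullet> ftrl h q \<le> conj_simplex h q'"
  using fenchel_young[OF ftrl_in_prob_simplex, of q' q]
  by (simp add: conj_simplex_eq_ftrl inner_diff_left)

lemma continuous_on_ftrl: "continuous_on UNIV (ftrl h)"
proof (rule continuous_on_unique_argmax[OF compact_prob_simplex, where f = "\<lambda>q x. q \<bullet> x - h x"])
  show "continuous_on (UNIV \<times> prob_simplex) (\<lambda>(q, x). q \<bullet> x - h x)"
    unfolding case_prod_beta
    by (intro continuous_intros continuous_on_compose2[OF continuous]) auto
  show "x = ftrl h q" if "x \<in> prob_simplex" "\<forall>y\<in>prob_simplex. q \<bullet> y - h y \<le> q \<bullet> x - h x" for q x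
    using strictly_convex_on_argmax_unique[OF strictly_convex that(1) ftrl_in_prob_simplex that(2)] ftrl_maximal
    by blast
qed (auto intro: ftrl_in_prob_simplex ftrl_maximal)

lemma lossless_via_ftrl: "lossless_via (ftrl h) xs (\<lambda>q. conj_simplex h q - q \<bullet> xs + h xs)"
proof (rule lossless_via_if_continuous_subgradient[OF continuous_on_ftrl])
  show "conj_simplex h q - q \<bullet> xs + h xs + (q' - q) \<bullet> (ftrl h q - xs)
      \<le> conj_simplex h q' - q' \<bullet> xs + h xs" for q q'
    using conj_simplex_subgradient[of q q'] by (simp add: inner_diff_left inner_diff_right)
qed

lemma bdd_below_conj_simplex_storage:
  assumes "xs \<in> prob_simplex"
  shows "bdd_below (range (\<lambda>q. conj_simplex h q - q \<bullet> xs + h xs))"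
proof (rule bdd_belowI2[of _ 0])
  show "0 \<le> conj_simplex h q - q \<bullet> xs + h xs" for q
    using fenchel_young[OF assms, of q] by linarith
qed

end

theorem theorem4p1:
  fixes h :: "real ^ 'n::finite \<Rightarrow> real"
  assumes "strictly_convex_on prob_simplex h"
    and "continuous_on prob_simplex h"
  shows "(\<forall>xs\<in>prob_simplex.
            lossless_via (ftrl h) xs (\<lambda>q. conj_simplex h q - q \<bullet> xs + h xs) \<and>
            bdd_below (range (\<lambda>q. conj_simplex h q - q \<bullet> xs + h xs)))
         \<and> finitely_lossless_dynamic (ftrl h)"
proof -
  have storage: "lossless_via (ftrl h) xs (\<lambda>q. conj_simplex h q - q \<bullet> xs + h xs) \<and>
      bdd_below (range (\<lambda>q. conj_simplex h q - q \<bullet> xs + h xs))" if "xs \<in> prob_simplex" for xs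
    using lossless_via_ftrl[OF assms] bdd_below_conj_simplex_storage[OF assms that] by (rule conjI)
  moreover have "finitely_lossless_dynamic (ftrl h)"
    unfolding finitely_lossless_dynamic_def finitely_lossless_def
  proof
    fix j :: 'n
    from storage[OF axis_in_prob_simplex[of j]]
    show "\<exists>L. bdd_below (range L) \<and> lossless_via (ftrl h) (axis j 1) L"
      by blast
  qed
  ultimately show ?thesis
    by simp
qed

end
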